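(* Let $p$ be an odd prime and $a,s$ natural numbers with $a<p$. For every set partition $\delta$ of $\{1,\ldots,as\}$ into $s$ sets of size $a$, there are exactly $p^{(a-1)s}$ distinct set partitions of $\{1,\ldots,asp\}$ into $sp$ sets of size $a$ which are fixed by $R_{as}$ and have type $\delta$.
   Context: For $j\geq 1$ let $z_j=(p(j-1)+1,\ldots,pj)$ and $\mathcal{O}_j=\{p(j-1)+1,\ldots,pj\}$. Let $\sigma=z_1\cdots z_{as}\in S_{asp}$ (right actions) and $R_{as}=\langle\sigma\rangle$. Given a set partition $\delta=\{\delta_1,\ldots,\delta_s\}$ of $\{1,\ldots,as\}$ into sets of size $a$, a set partition $\omega$ of $\{1,\ldots,asp\}$ into $sp$ sets of size $a$ has type $\delta$ if there are sets $A_1,\ldots,A_s$ of size $a$ with $|A_i\cap\mathcal{O}_j|=1$ if $j\in\delta_i$ and $|A_i\cap\mathcal{O}_j|=0$ if $j\notin\delta_i$, such that $\omega=\{A_i\sigma^k : 1\leq i\leq s,\ 0\leq k\leq p-1\}$. Every set partition fixed by $R_{as}$ has a unique type. *)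

theory Defs
  imports Main "HOL-Library.Disjoint_Sets" "HOL-Computational_Algebra.Primes"
begin

definition orb :: "nat \<Rightarrow> nat \<Rightarrow> nat set" where
  "orb p j = {p * (j - 1) + 1 .. p * j}"

text \<open>sigma = z_1 ... z_n in Sym({1..n*p}), where z_j = (p(j-1)+1, ..., pj)
  is the p-cycle on O_j; points outside {1..n*p} are fixed.\<close>
definition sigma :: "nat \<Rightarrow> nat \<Rightarrow> nat \<Rightarrow> nat" where
  "sigma p n x = (if 1 \<le> x \<and> x \<le> n * p
                  then (if x mod p = 0 then x + 1 - p else x + 1)
                  else x)"

definition act_pow :: "nat \<Rightarrow> nat \<Rightarrow> nat \<Rightarrow> nat set \<Rightarrow> nat set" where
  "act_pow p n k A = (sigma p n ^^ k) ` A"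

definition set_partition_into :: "nat set \<Rightarrow> nat \<Rightarrow> nat \<Rightarrow> nat set set \<Rightarrow> bool" where
  "set_partition_into S m a P \<longleftrightarrow> partition_on S P \<and> card P = m \<and> (\<forall>B\<in>P. card B = a)"

text \<open>omega is fixed by R = <sigma> (with n = as cycles).\<close>
definition fixed_by_R :: "nat \<Rightarrow> nat \<Rightarrow> nat set set \<Rightarrow> bool" where
  "fixed_by_R p n \<omega> \<longleftrightarrow> (\<forall>k. (act_pow p n k) ` \<omega> = \<omega>)"

text \<open>omega has type delta (n = as). The sets A_i are indexed by the blocks of delta.\<close>
definition has_type :: "nat \<Rightarrow> nat \<Rightarrow> nat \<Rightarrow> nat set set \<Rightarrow> nat set set \<Rightarrow> bool" where
  "has_type p a n \<delta> \<omega> \<longleftrightarrow>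
     (\<exists>A :: nat set \<Rightarrow> nat set.
        (\<forall>D\<in>\<delta>. card (A D) = a \<and>
                 (\<forall>j. (j \<in> D \<longrightarrow> card (A D \<inter> orb p j) = 1) \<and>
                      (j \<notin> D \<longrightarrow> card (A D \<inter> orb p j) = 0))) \<and>
        \<omega> = {act_pow p n k (A D) | D k. D \<in> \<delta> \<and> k \<le> p - 1})"

end

theory Submission
  imports Defs "HOL-Number_Theory.Cong"
begin

text \<open>
  Write the points of the orbit O_j as orb_point p j r with r < p; then sigma adds 1 to r
  modulo p inside every orbit. A set meeting O_j in one point for j in D and missing all other
  orbits is the transversal of a label function h : D -> Z/p, and sigma^k adds k to all of its
  labels. So a partition of type delta fixed by sigma consists, for every block D of delta, of
  the p shifts of one labelled transversal, and it determines the labels on D up to a common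
  additive constant. Pinning the label of Min D to 0 removes this ambiguity and leaves
  p^(a-1) choices per block, hence p^((a-1)s) partitions. Conversely, every such family of
  shifted transversals is a partition of {1..asp} into sp sets of size a fixed by sigma.
\<close>

lemma mod_add_left_cancel: "(c + k) mod p = (c + k') mod p \<longleftrightarrow> k mod p = (k' :: nat) mod p"
  using cong_add_lcancel_nat unfolding cong_def .

lemma image_add_mod_lessThan: "0 < (p :: nat) \<Longrightarrow> (\<lambda>k. (c + k) mod p) ` {..<p} = {..<p}"
  by (intro endo_inj_surj inj_onI) (auto simp: mod_add_left_cancel)

section \<open>Points of the orbits\<close>

definition orb_point :: "nat \<Rightarrow> nat \<Rightarrow> nat \<Rightarrow> nat" where
  "orb_point p j r = p * (j - 1) + 1 + r"

lemma orb_point_coords: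
  assumes "1 \<le> j" "r < p"
  shows "(orb_point p j r - 1) div p + 1 = j" and "(orb_point p j r - 1) mod p = r"
  using assms by (auto simp: orb_point_def)

lemma orb_point_eq_iff:
  assumes "1 \<le> j" "1 \<le> j'" "r < p" "r' < p"
  shows "orb_point p j r = orb_point p j' r' \<longleftrightarrow> j = j' \<and> r = r'"
  using orb_point_coords[OF assms(1,3)] orb_point_coords[OF assms(2,4)] by metis

lemma orb_point_of_coords:
  "1 \<le> x \<Longrightarrow> orb_point p ((x - 1) div p + 1) ((x - 1) mod p) = x"
  by (simp add: orb_point_def)

lemma mem_orb_iff:
  assumes "0 < p"
  shows "x \<in> orb p j \<longleftrightarrow> 1 \<le> x \<and> (x - 1) div p + 1 = j"
proof (cases j)
  case 0
  then show ?thesis by (simp add: orb_def)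
next
  case (Suc i)
  have "x \<in> orb p j \<longleftrightarrow> 1 \<le> x \<and> p * i \<le> x - 1 \<and> x - 1 < p * Suc i"
    using Suc by (auto simp: orb_def)
  also have "\<dots> \<longleftrightarrow> 1 \<le> x \<and> (x - 1) div p = i"
    using assms div_nat_eqI dividend_less_times_div by auto
  finally show ?thesis using Suc by simp
qed

lemma orb_point_mem_orb_iff:
  assumes "1 \<le> i" "r < p"
  shows "orb_point p i r \<in> orb p j \<longleftrightarrow> i = j"
  using assms orb_point_coords[OF assms] by (simp add: mem_orb_iff orb_point_def)

lemma orb_point_mem_interval:
  assumes "1 \<le> j" "j \<le> n" "r < p"
  shows "orb_point p j r \<in> {1..n * p}"
proof -
  have "p * (j - 1) + p = p * j"
    using assms(1) by (cases j) auto
  also have "\<dots> \<le> n * p"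
    using assms(2) by simp
  finally show ?thesis using assms by (simp add: orb_point_def)
qed

lemma orb_index_le:
  fixes x n p :: nat
  assumes "x \<in> {1..n * p}" "0 < p"
  shows "(x - 1) div p + 1 \<le> n"
proof -
  have "x - 1 < n * p"
    using assms(1) by auto
  then have "(x - 1) div p < n"
    by (rule less_mult_imp_div_less)
  then show ?thesis
    by simp
qed

lemma sigma_orb_point:
  assumes "1 \<le> j" "j \<le> n" "r < p"
  shows "sigma p n (orb_point p j r) = orb_point p j (Suc r mod p)"
proof -
  have "orb_point p j r mod p = Suc r mod p"
    by (simp add: orb_point_def mod_add_left_eq[symmetric])
  moreover have "orb_point p j r \<in> {1..n * p}"
    using orb_point_mem_interval assms .
  moreover have "Suc r = p \<or> Suc r < p"
    using assms(3) by linarith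
  ultimately show ?thesis
    unfolding sigma_def by (auto simp: orb_point_def)
qed

lemma sigma_pow_orb_point:
  assumes "1 \<le> j" "j \<le> n" "r < p"
  shows "(sigma p n ^^ k) (orb_point p j r) = orb_point p j ((r + k) mod p)"
proof (induction k)
  case (Suc k)
  then show ?case
    using assms by (simp add: sigma_orb_point mod_Suc_eq)
qed (use assms in simp)

section \<open>Transversals\<close>

definition transversal :: "nat \<Rightarrow> (nat \<Rightarrow> nat) \<Rightarrow> nat set \<Rightarrow> nat set" where
  "transversal p h D = (\<lambda>j. orb_point p j (h j)) ` D"

definition shift :: "nat \<Rightarrow> (nat \<Rightarrow> nat) \<Rightarrow> nat \<Rightarrow> nat \<Rightarrow> nat" where
  "shift p h k = (\<lambda>j. (h j + k) mod p)"

lemma shift_less: "0 < p \<Longrightarrow> shift p h k j < p"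
  by (simp add: shift_def)

lemma shift_shift: "shift p (shift p h k) k' = shift p h (k + k')"
  by (simp add: shift_def mod_add_left_eq add.assoc)

lemma shift_mod: "shift p h (k mod p) = shift p h k"
  by (simp add: shift_def mod_add_right_eq)

lemma orb_point_mem_transversal_iff:
  assumes "D \<subseteq> {1..}" "\<forall>j\<in>D. h j < p" "1 \<le> j" "r < p"
  shows "orb_point p j r \<in> transversal p h D \<longleftrightarrow> j \<in> D \<and> h j = r"
proof
  assume "orb_point p j r \<in> transversal p h D"
  then obtain i where "i \<in> D" "orb_point p j r = orb_point p i (h i)"
    by (auto simp: transversal_def)
  then show "j \<in> D \<and> h j = r"
    using assms orb_point_eq_iff[of j i r p "h i"] by auto
qed (auto simp: transversal_def)

lemma transversal_eq_iff:
  assumes "D \<subseteq> {1..}" "\<forall>j\<in>D. h j < p" "\<forall>j\<in>D. h' j < p"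
  shows "transversal p h D = transversal p h' D \<longleftrightarrow> (\<forall>j\<in>D. h j = h' j)"
proof
  assume eq: "transversal p h D = transversal p h' D"
  show "\<forall>j\<in>D. h j = h' j"
  proof
    fix j assume "j \<in> D"
    then have "orb_point p j (h j) \<in> transversal p h' D"
      using eq by (auto simp: transversal_def)
    moreover have "1 \<le> j"
      using assms(1) \<open>j \<in> D\<close> by auto
    ultimately show "h j = h' j"
      using orb_point_mem_transversal_iff[OF assms(1,3)] assms(2) \<open>j \<in> D\<close> by auto
  qed
qed (auto simp: transversal_def)

lemma transversal_subset:
  assumes "D \<subseteq> {1..n}" "\<forall>j\<in>D. h j < p"
  shows "transversal p h D \<subseteq> {1..n * p}"
proof
  fix x assume "x \<in> transversal p h D"
  then obtain j where "j \<in> D" "x = orb_point p j (h j)"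
    by (auto simp: transversal_def)
  then show "x \<in> {1..n * p}"
    using assms orb_point_mem_interval[of j n "h j" p] by auto
qed

lemma card_transversal:
  assumes "D \<subseteq> {1..}" "\<forall>j\<in>D. h j < p"
  shows "card (transversal p h D) = card D"
  unfolding transversal_def
proof (intro card_image inj_onI)
  fix i j assume "i \<in> D" "j \<in> D" "orb_point p i (h i) = orb_point p j (h j)"
  then show "i = j"
    using assms orb_point_eq_iff[of i j "h i" p "h j"] by auto
qed

lemma transversal_Int_orb:
  assumes "D \<subseteq> {1..}" "\<forall>j\<in>D. h j < p"
  shows "transversal p h D \<inter> orb p j = (if j \<in> D then {orb_point p j (h j)} else {})"
  using assms orb_point_mem_orb_iff[of _ "h _" p j] by (auto simp: transversal_def subset_eq)

lemma act_pow_transversal: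
  assumes "D \<subseteq> {1..n}" "\<forall>j\<in>D. h j < p"
  shows "act_pow p n k (transversal p h D) = transversal p (shift p h k) D"
  unfolding act_pow_def transversal_def image_image
proof (rule image_cong[OF refl])
  fix j assume "j \<in> D"
  then show "(sigma p n ^^ k) (orb_point p j (h j)) = orb_point p j (shift p h k j)"
    using assms sigma_pow_orb_point[of j n "h j" p k] by (auto simp: shift_def)
qed

lemma shift_orbit_eq:
  assumes "0 < p"
  shows "(\<lambda>k. transversal p (shift p h (c + k)) D) ` {..<p} = (\<lambda>k. transversal p (shift p h k) D) ` {..<p}"
proof -
  have "(\<lambda>k. transversal p (shift p h (c + k)) D) ` {..<p}
      = (\<lambda>k. transversal p (shift p h k) D) ` (\<lambda>k. (c + k) mod p) ` {..<p}"
    by (simp add: image_image shift_mod[of p h "c + _", symmetric])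
  then show ?thesis
    using image_add_mod_lessThan[OF assms] by simp
qed

lemma transversal_shift_0:
  "\<forall>j\<in>D. h j < p \<Longrightarrow> transversal p (shift p h 0) D = transversal p h D"
  by (simp add: transversal_def shift_def)

lemma transversal_of_orb_cards:
  assumes "0 < p" "D \<subseteq> {1..}" "finite B" "card B = card D"
    and "\<forall>j\<in>D. card (B \<inter> orb p j) = 1"
  shows "\<exists>h. (\<forall>j\<in>D. h j < p) \<and> B = transversal p h D"
proof -
  have "\<forall>j\<in>D. \<exists>y. B \<inter> orb p j = {y}"
    using assms(5) by (simp add: card_1_singleton_iff)
  from bchoice[OF this] obtain x where x: "\<forall>j\<in>D. B \<inter> orb p j = {x j}"
    by blast
  define h where "h j = (x j - 1) mod p" for j
  have h_less: "\<forall>j\<in>D. h j < p"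
    using assms(1) by (simp add: h_def)
  have "orb_point p j (h j) = x j" if "j \<in> D" for j
  proof -
    have "x j \<in> orb p j"
      using x that by blast
    then have "1 \<le> x j" "(x j - 1) div p + 1 = j"
      using mem_orb_iff[OF assms(1)] by auto
    then show ?thesis
      using orb_point_of_coords[of "x j" p] by (simp add: h_def)
  qed
  then have "transversal p h D \<subseteq> B"
    using x by (auto simp: transversal_def)
  moreover have "card (transversal p h D) = card B"
    using card_transversal[OF assms(2) h_less] assms(4) by simp
  ultimately have "transversal p h D = B"
    using assms(3) by (simp add: card_subset_eq)
  then show ?thesis
    using h_less by blast
qed

section \<open>Fixed partitions of a given type\<close>

locale partition_type =
  fixes p n :: nat and \<delta> :: "nat set set"
  assumes p_pos: "0 < p" and partition: "partition_on {1..n} \<delta>"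
begin

lemma block_subset: "D \<in> \<delta> \<Longrightarrow> D \<subseteq> {1..n}"
  using partition by (auto simp: partition_on_def)

lemma block_subset_atLeast: "D \<in> \<delta> \<Longrightarrow> D \<subseteq> {1..}"
  using block_subset by fastforce

lemma finite_block: "D \<in> \<delta> \<Longrightarrow> finite D"
  using block_subset finite_subset by blast

lemma block_nonempty: "D \<in> \<delta> \<Longrightarrow> D \<noteq> {}"
  using partition by (auto simp: partition_on_def)

lemma Min_block: "D \<in> \<delta> \<Longrightarrow> Min D \<in> D"
  using finite_block block_nonempty Min_in by blast

lemma finite_delta: "finite \<delta>"
  using partition finite_UnionD unfolding partition_on_def by (metis finite_atLeastAtMost)

lemma block_unique: "D \<in> \<delta> \<Longrightarrow> D' \<in> \<delta> \<Longrightarrow> j \<in> D \<Longrightarrow> j \<in> D' \<Longrightarrow> D = D'"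
  using partition unfolding partition_on_def pairwise_def disjnt_def by blast

lemma block_exists: "j \<in> {1..n} \<Longrightarrow> \<exists>D\<in>\<delta>. j \<in> D"
  using partition by (auto simp: partition_on_def)

definition labelling :: "(nat set \<Rightarrow> nat \<Rightarrow> nat) \<Rightarrow> bool" where
  "labelling H \<longleftrightarrow> (\<forall>D\<in>\<delta>. \<forall>j\<in>D. H D j < p)"

definition orbit_partition :: "(nat set \<Rightarrow> nat \<Rightarrow> nat) \<Rightarrow> nat set set" where
  "orbit_partition H = (\<lambda>(D, k). transversal p (shift p (H D) k) D) ` (\<delta> \<times> {..<p})"

lemma orbit_partition_UN:
  "orbit_partition H = (\<Union>D\<in>\<delta>. (\<lambda>k. transversal p (shift p (H D) k) D) ` {..<p})"
  unfolding orbit_partition_def by auto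

lemma orbit_partition_eq_act_pow:
  assumes "labelling H"
  shows "{act_pow p n k (transversal p (H D) D) | D k. D \<in> \<delta> \<and> k \<le> p - 1} = orbit_partition H"
proof -
  have act: "act_pow p n k (transversal p (H D) D) = transversal p (shift p (H D) k) D"
    if "D \<in> \<delta>" for D k
    using act_pow_transversal[OF block_subset] assms that by (simp add: labelling_def)
  have less: "k \<le> p - 1 \<longleftrightarrow> k < p" for k
    using p_pos by linarith
  have "{act_pow p n k (transversal p (H D) D) | D k. D \<in> \<delta> \<and> k \<le> p - 1}
      = {transversal p (shift p (H D) k) D | D k. D \<in> \<delta> \<and> k < p}"
  proof (intro set_eqI iffI)
    fix B assume "B \<in> {act_pow p n k (transversal p (H D) D) | D k. D \<in> \<delta> \<and> k \<le> p - 1}"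
    then obtain D k where "D \<in> \<delta>" "k < p" "B = act_pow p n k (transversal p (H D) D)"
      using less by blast
    then show "B \<in> {transversal p (shift p (H D) k) D | D k. D \<in> \<delta> \<and> k < p}"
      using act by blast
  next
    fix B assume "B \<in> {transversal p (shift p (H D) k) D | D k. D \<in> \<delta> \<and> k < p}"
    then obtain D k where "D \<in> \<delta>" "k \<le> p - 1" "B = transversal p (shift p (H D) k) D"
      using less by blast
    then show "B \<in> {act_pow p n k (transversal p (H D) D) | D k. D \<in> \<delta> \<and> k \<le> p - 1}"
      using act by blast
  qed
  also have "\<dots> = orbit_partition H"
    unfolding orbit_partition_def by auto
  finally show ?thesis .
qed

lemma orbit_partition_blocks_meet:
  assumes "D \<in> \<delta>" "D' \<in> \<delta>" "k < p" "k' < p"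
    and "x \<in> transversal p (shift p (H D) k) D" "x \<in> transversal p (shift p (H D') k') D'"
  shows "D = D' \<and> k = k'"
proof -
  obtain j where j: "j \<in> D" "x = orb_point p j (shift p (H D) k j)"
    using assms(5) by (auto simp: transversal_def)
  then have "j \<in> D' \<and> shift p (H D') k' j = shift p (H D) k j"
    using assms(6) orb_point_mem_transversal_iff[OF block_subset_atLeast[OF assms(2)]]
      shift_less[OF p_pos] block_subset_atLeast[OF assms(1)] by blast
  moreover from this have "D = D'"
    using block_unique assms(1,2) j(1) by blast
  ultimately have "(H D j + k') mod p = (H D j + k) mod p"
    by (simp add: shift_def)
  then have "k' = k"
    using assms(3,4) by (simp add: mod_add_left_cancel)
  with \<open>D = D'\<close> show ?thesis by simp
qed

lemma partition_on_orbit_partition: "partition_on {1..n * p} (orbit_partition H)"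
proof (rule partition_onI)
  show "\<Union>(orbit_partition H) = {1..n * p}"
  proof
    show "\<Union>(orbit_partition H) \<subseteq> {1..n * p}"
    proof
      fix x assume "x \<in> \<Union>(orbit_partition H)"
      then obtain D k where "D \<in> \<delta>" "x \<in> transversal p (shift p (H D) k) D"
        by (auto simp: orbit_partition_def)
      then show "x \<in> {1..n * p}"
        using transversal_subset[OF block_subset, of D "shift p (H D) k" p] shift_less[OF p_pos]
        by blast
    qed
  next
    show "{1..n * p} \<subseteq> \<Union>(orbit_partition H)"
    proof
      fix x assume x: "x \<in> {1..n * p}"
      define j r where "j = (x - 1) div p + 1" and "r = (x - 1) mod p"
      have "j \<in> {1..n}"
        using orb_index_le[OF x p_pos] by (simp add: j_def)
      then obtain D where D: "D \<in> \<delta>" "j \<in> D"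
        using block_exists by blast
      have "r \<in> (\<lambda>k. (H D j + k) mod p) ` {..<p}"
        using image_add_mod_lessThan[OF p_pos] p_pos by (simp add: r_def)
      then obtain k where "k < p" "shift p (H D) k j = r"
        by (auto simp: shift_def)
      moreover have "x = orb_point p j r"
        using x orb_point_of_coords by (simp add: j_def r_def)
      ultimately have "x \<in> transversal p (shift p (H D) k) D"
        using D(2) by (auto simp: transversal_def)
      then show "x \<in> \<Union>(orbit_partition H)"
        using D(1) \<open>k < p\<close> by (auto simp: orbit_partition_def)
    qed
  qed
next
  show "{} \<notin> orbit_partition H"
    using block_nonempty by (auto simp: orbit_partition_def transversal_def)
next
  fix B C assume "B \<in> orbit_partition H" "C \<in> orbit_partition H" "B \<noteq> C"
  then obtain D k D' k' where "D \<in> \<delta>" "k < p" "B = transversal p (shift p (H D) k) D"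
    and "D' \<in> \<delta>" "k' < p" "C = transversal p (shift p (H D') k') D'"
    by (auto simp: orbit_partition_def)
  then show "disjnt B C"
    using orbit_partition_blocks_meet \<open>B \<noteq> C\<close> unfolding disjnt_def by blast
qed

lemma card_orbit_partition: "card (orbit_partition H) = card \<delta> * p"
proof -
  have "inj_on (\<lambda>(D, k). transversal p (shift p (H D) k) D) (\<delta> \<times> {..<p})"
  proof (rule inj_onI, clarify)
    fix D k D' k'
    assume D: "D \<in> \<delta>" "k < p" "D' \<in> \<delta>" "k' < p"
      and eq: "transversal p (shift p (H D) k) D = transversal p (shift p (H D') k') D'"
    have "orb_point p (Min D) (shift p (H D) k (Min D)) \<in> transversal p (shift p (H D) k) D"
      using Min_block[OF D(1)] by (auto simp: transversal_def)
    then show "D = D' \<and> k = k'"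
      using orbit_partition_blocks_meet[OF D(1,3,2,4), of _ H] eq by simp
  qed
  then show ?thesis
    unfolding orbit_partition_def by (simp add: card_image card_cartesian_product)
qed

lemma card_orbit_partition_block:
  assumes "B \<in> orbit_partition H"
  obtains D where "D \<in> \<delta>" "card B = card D"
proof -
  obtain D k where "D \<in> \<delta>" "B = transversal p (shift p (H D) k) D"
    using assms by (auto simp: orbit_partition_def)
  then show thesis
    using that card_transversal[OF block_subset_atLeast] shift_less[OF p_pos] by blast
qed

lemma act_pow_image_orbit_partition: "act_pow p n k ` orbit_partition H = orbit_partition H"
proof -
  have "act_pow p n k (transversal p (shift p (H D) k') D) = transversal p (shift p (H D) (k + k')) D"
    if "D \<in> \<delta>" for D k'
    using act_pow_transversal[OF block_subset[OF that]] shift_less[OF p_pos]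
    by (simp add: shift_shift add.commute)
  then have "act_pow p n k ` orbit_partition H
      = (\<Union>D\<in>\<delta>. (\<lambda>k'. transversal p (shift p (H D) (k + k')) D) ` {..<p})"
    unfolding orbit_partition_UN image_UN image_image by simp
  also have "\<dots> = orbit_partition H"
    unfolding orbit_partition_UN using shift_orbit_eq[OF p_pos] by simp
  finally show ?thesis .
qed

lemma has_type_orbit_partition:
  assumes "labelling H" "\<forall>D\<in>\<delta>. card D = a"
  shows "has_type p a n \<delta> (orbit_partition H)"
  unfolding has_type_def
proof (intro exI conjI ballI allI impI)
  fix D j assume D: "D \<in> \<delta>"
  have H: "\<forall>j\<in>D. H D j < p"
    using assms(1) D by (simp add: labelling_def)
  show "card (transversal p (H D) D) = a"
    using card_transversal[OF block_subset_atLeast[OF D] H] assms(2) D by simp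
  show "card (transversal p (H D) D \<inter> orb p j) = 1" if "j \<in> D"
    using transversal_Int_orb[OF block_subset_atLeast[OF D] H] that by simp
  show "card (transversal p (H D) D \<inter> orb p j) = 0" if "j \<notin> D"
    using transversal_Int_orb[OF block_subset_atLeast[OF D] H] that by simp
next
  show "orbit_partition H = {act_pow p n k (transversal p (H D) D) | D k. D \<in> \<delta> \<and> k \<le> p - 1}"
    using orbit_partition_eq_act_pow[OF assms(1)] by simp
qed

lemma has_type_imp_orbit_partition:
  assumes "has_type p a n \<delta> \<omega>" "\<forall>D\<in>\<delta>. card D = a"
  obtains H where "labelling H" "\<omega> = orbit_partition H"
proof -
  obtain A where A: "\<forall>D\<in>\<delta>. card (A D) = a \<and> (\<forall>j. (j \<in> D \<longrightarrow> card (A D \<inter> orb p j) = 1)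
      \<and> (j \<notin> D \<longrightarrow> card (A D \<inter> orb p j) = 0))"
    and \<omega>: "\<omega> = {act_pow p n k (A D) | D k. D \<in> \<delta> \<and> k \<le> p - 1}"
    using assms(1) unfolding has_type_def by blast
  have "\<exists>h. (\<forall>j\<in>D. h j < p) \<and> A D = transversal p h D" if D: "D \<in> \<delta>" for D
  proof (rule transversal_of_orb_cards[OF p_pos block_subset_atLeast[OF D]])
    have "card (A D) = card D"
      using A assms(2) D by simp
    moreover have "card D > 0"
      using finite_block[OF D] block_nonempty[OF D] by auto
    ultimately show "finite (A D)" "card (A D) = card D"
      by (auto intro: card_ge_0_finite)
    show "\<forall>j\<in>D. card (A D \<inter> orb p j) = 1"
      using A D by blast
  qed
  then obtain H where H: "\<forall>D\<in>\<delta>. (\<forall>j\<in>D. H D j < p) \<and> A D = transversal p (H D) D"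
    by metis
  then have "labelling H"
    by (simp add: labelling_def)
  moreover have "\<omega> = {act_pow p n k (transversal p (H D) D) | D k. D \<in> \<delta> \<and> k \<le> p - 1}"
    unfolding \<omega> using H by (metis (no_types, lifting))
  ultimately show thesis
    using that orbit_partition_eq_act_pow by simp
qed

lemma transversal_mem_orbit_partition:
  assumes "labelling H" "D \<in> \<delta>"
  shows "transversal p (H D) D \<in> orbit_partition H"
proof -
  have "transversal p (H D) D = transversal p (shift p (H D) 0) D"
    using assms transversal_shift_0 by (simp add: labelling_def)
  then show ?thesis
    using assms(2) p_pos by (auto simp: orbit_partition_def)
qed

subsection \<open>Normal labellings\<close>

definition normal_labels :: "nat set \<Rightarrow> (nat \<Rightarrow> nat) set" where
  "normal_labels D = (\<Pi>\<^sub>E j\<in>D. if j = Min D then {0} else {..<p})"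

definition normal_labellings :: "(nat set \<Rightarrow> nat \<Rightarrow> nat) set" where
  "normal_labellings = (\<Pi>\<^sub>E D\<in>\<delta>. normal_labels D)"

lemma normal_label_mem:
  assumes "H \<in> normal_labellings" "D \<in> \<delta>" "j \<in> D"
  shows "H D j \<in> (if j = Min D then {0} else {..<p})"
proof -
  have "H D \<in> normal_labels D"
    using assms(1,2) unfolding normal_labellings_def by (rule PiE_mem)
  then show ?thesis
    using assms(3) unfolding normal_labels_def by (rule PiE_mem)
qed

lemma labelling_if_normal: "H \<in> normal_labellings \<Longrightarrow> labelling H"
  using normal_label_mem p_pos by (fastforce simp: labelling_def split: if_splits)

lemma normal_label_Min: "H \<in> normal_labellings \<Longrightarrow> D \<in> \<delta> \<Longrightarrow> H D (Min D) = 0"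
  using normal_label_mem Min_block by fastforce

lemma card_normal_labels:
  assumes "D \<in> \<delta>"
  shows "card (normal_labels D) = p ^ (card D - 1)"
proof -
  let ?c = "\<lambda>j. card (if j = Min D then {0} else {..<p})"
  have "card (normal_labels D) = (\<Prod>j\<in>D. ?c j)"
    unfolding normal_labels_def using finite_block[OF assms] by (rule card_PiE)
  also have "\<dots> = ?c (Min D) * (\<Prod>j\<in>D - {Min D}. ?c j)"
    using prod.remove[OF finite_block[OF assms] Min_block[OF assms]] .
  also have "\<dots> = (\<Prod>j\<in>D - {Min D}. p)"
    using prod.cong[of "D - {Min D}" _ ?c "\<lambda>_. p"] by simp
  also have "\<dots> = p ^ (card D - 1)"
    using Min_block[OF assms] finite_block[OF assms] by (simp add: card_Diff_singleton)
  finally show ?thesis .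
qed

lemma card_normal_labellings:
  assumes "\<forall>D\<in>\<delta>. card D = a"
  shows "card normal_labellings = p ^ ((a - 1) * card \<delta>)"
proof -
  have "card normal_labellings = (\<Prod>D\<in>\<delta>. card (normal_labels D))"
    unfolding normal_labellings_def using finite_delta by (rule card_PiE)
  also have "\<dots> = (\<Prod>D\<in>\<delta>. p ^ (a - 1))"
    using assms card_normal_labels by simp
  finally show ?thesis
    by (simp add: power_mult)
qed

lemma orbit_partition_block_through_Min:
  assumes "H \<in> normal_labellings" "D \<in> \<delta>" "B \<in> orbit_partition H"
    and "orb_point p (Min D) 0 \<in> B"
  shows "B = transversal p (H D) D"
proof -
  obtain D' k where D': "D' \<in> \<delta>" "k < p" and B: "B = transversal p (shift p (H D') k) D'"
    using assms(3) by (auto simp: orbit_partition_def)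
  have "Min D \<in> D' \<and> shift p (H D') k (Min D) = 0"
    using assms(4) B orb_point_mem_transversal_iff[OF block_subset_atLeast[OF D'(1)]]
      shift_less[OF p_pos] block_subset_atLeast[OF assms(2)] Min_block[OF assms(2)] p_pos
    by blast
  then have "D' = D" and "k mod p = 0"
    using block_unique[OF assms(2) D'(1) Min_block[OF assms(2)]] normal_label_Min[OF assms(1,2)]
    by (auto simp: shift_def)
  then have "B = transversal p (shift p (H D) 0) D"
    using B D'(2) by simp
  then show ?thesis
    using transversal_shift_0 labelling_if_normal[OF assms(1)] assms(2)
    by (simp add: labelling_def)
qed

lemma inj_on_orbit_partition: "inj_on orbit_partition normal_labellings"
proof (rule inj_onI)
  fix H H' assume H: "H \<in> normal_labellings" and H': "H' \<in> normal_labellings"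
    and eq: "orbit_partition H = orbit_partition H'"
  show "H = H'"
  proof (rule PiE_ext[OF H[unfolded normal_labellings_def] H'[unfolded normal_labellings_def]])
    fix D assume D: "D \<in> \<delta>"
    let ?B = "transversal p (H D) D"
    have "?B \<in> orbit_partition H'"
      using transversal_mem_orbit_partition[OF labelling_if_normal[OF H] D] eq by simp
    moreover have "orb_point p (Min D) 0 \<in> ?B"
      using Min_block[OF D] normal_label_Min[OF H D] unfolding transversal_def
      by (intro image_eqI[of _ _ "Min D"]) simp_all
    ultimately have "?B = transversal p (H' D) D"
      by (rule orbit_partition_block_through_Min[OF H' D])
    moreover have "\<forall>j\<in>D. H D j < p" "\<forall>j\<in>D. H' D j < p"
      using labelling_if_normal[OF H] labelling_if_normal[OF H'] D
      unfolding labelling_def by blast+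
    ultimately have "\<forall>j\<in>D. H D j = H' D j"
      using transversal_eq_iff[OF block_subset_atLeast[OF D]] by blast
    moreover have "H D \<in> normal_labels D" "H' D \<in> normal_labels D"
      using H H' D unfolding normal_labellings_def by (simp_all only: PiE_mem)
    ultimately show "H D = H' D"
      unfolding normal_labels_def by (intro PiE_ext) auto
  qed
qed

definition normalized :: "(nat set \<Rightarrow> nat \<Rightarrow> nat) \<Rightarrow> nat set \<Rightarrow> nat \<Rightarrow> nat" where
  "normalized H = (\<lambda>D\<in>\<delta>. \<lambda>j\<in>D. (H D j + (p - H D (Min D))) mod p)"

lemma normalized_mem_normal_labellings:
  assumes "labelling H"
  shows "normalized H \<in> normal_labellings"
  unfolding normalized_def normal_labellings_def normal_labels_def
proof (intro restrict_PiE_iff[THEN iffD2] ballI)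
  fix D j assume D: "D \<in> \<delta>" and j: "j \<in> D"
  have "H D (Min D) < p"
    using assms D Min_block[OF D] by (simp add: labelling_def)
  then show "(H D j + (p - H D (Min D))) mod p \<in> (if j = Min D then {0} else {..<p})"
    using p_pos by auto
qed

lemma orbit_partition_normalized: "orbit_partition (normalized H) = orbit_partition H"
  unfolding orbit_partition_UN
proof (rule SUP_cong[OF refl])
  fix D assume D: "D \<in> \<delta>"
  define c where "c = p - H D (Min D)"
  have "transversal p (shift p (normalized H D) k) D = transversal p (shift p (H D) (c + k)) D" for k
    unfolding transversal_def
    using D by (intro image_cong) (simp_all add: normalized_def shift_def c_def mod_add_left_eq add.assoc)
  then show "(\<lambda>k. transversal p (shift p (normalized H D) k) D) ` {..<p}
      = (\<lambda>k. transversal p (shift p (H D) k) D) ` {..<p}"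
    using shift_orbit_eq[OF p_pos] by simp
qed

lemma fixed_typed_partitions_eq:
  assumes "\<forall>D\<in>\<delta>. card D = a"
  shows "{\<omega>. set_partition_into {1..n * p} (card \<delta> * p) a \<omega> \<and> fixed_by_R p n \<omega> \<and> has_type p a n \<delta> \<omega>}
      = orbit_partition ` normal_labellings" (is "?T = _")
proof (intro set_eqI iffI)
  fix \<omega> assume "\<omega> \<in> ?T"
  then obtain H where "labelling H" "\<omega> = orbit_partition H"
    using has_type_imp_orbit_partition assms by blast
  then show "\<omega> \<in> orbit_partition ` normal_labellings"
    using normalized_mem_normal_labellings orbit_partition_normalized by (metis image_eqI)
next
  fix \<omega> assume "\<omega> \<in> orbit_partition ` normal_labellings"
  then obtain H where H: "H \<in> normal_labellings" and \<omega>: "\<omega> = orbit_partition H"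
    by blast
  have "set_partition_into {1..n * p} (card \<delta> * p) a \<omega>"
    unfolding set_partition_into_def \<omega>
    using partition_on_orbit_partition card_orbit_partition card_orbit_partition_block assms
    by metis
  moreover have "fixed_by_R p n \<omega>"
    unfolding fixed_by_R_def \<omega> using act_pow_image_orbit_partition by blast
  moreover have "has_type p a n \<delta> \<omega>"
    unfolding \<omega> using has_type_orbit_partition[OF labelling_if_normal[OF H] assms] .
  ultimately show "\<omega> \<in> ?T"
    by blast
qed

end

theorem lemma3p3:
  fixes p a s :: nat and \<delta> :: "nat set set"
  assumes "prime p" and "odd p" and "a < p"
    and "set_partition_into {1..a * s} s a \<delta>"
  shows "card {\<omega>. set_partition_into {1..a * s * p} (s * p) a \<omega> \<and>
                 fixed_by_R p (a * s) \<omega> \<and> has_type p a (a * s) \<delta> \<omega>}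
         = p ^ ((a - 1) * s)"
proof -
  have \<delta>: "partition_on {1..a * s} \<delta>" "card \<delta> = s" "\<forall>D\<in>\<delta>. card D = a"
    using assms(4) unfolding set_partition_into_def by auto
  interpret partition_type p "a * s" \<delta>
    using prime_gt_0_nat[OF assms(1)] \<delta>(1) by unfold_locales
  have "card {\<omega>. set_partition_into {1..a * s * p} (s * p) a \<omega> \<and>
                 fixed_by_R p (a * s) \<omega> \<and> has_type p a (a * s) \<delta> \<omega>}
      = card (orbit_partition ` normal_labellings)"
    using fixed_typed_partitions_eq[OF \<delta>(3)] \<delta>(2) by simp
  also have "\<dots> = card normal_labellings"
    using inj_on_orbit_partition by (rule card_image)
  also have "\<dots> = p ^ ((a - 1) * s)"
    using card_normal_labellings[OF \<delta>(3)] \<delta>(2) by simp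
  finally show ?thesis .
qed

end
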